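(* Let $M$ be a smooth manifold, let $\mathfrak X(M)$ be the Lie algebra of vector fields (with the usual Lie bracket) and consider the 2-term complex $C^\infty(M)\xrightarrow{d}\Omega^1(M)$ given by the de Rham differential. For $X\in\mathfrak X(M)$, $\xi\in\Omega^1(M)$, $f\in C^\infty(M)$ define $\mu_0(X)(\xi)=[\![X,\xi]\!]=L_X\xi-\tfrac12 d(\xi(X))$, $\mu_1(X)(f)=\langle X,df\rangle=\tfrac12 X(f)$, and $\nu:\wedge^2\mathfrak X(M)\to\mathrm{Hom}(\Omega^1(M),C^\infty(M))$ by $\nu(X,Y)(\xi)=T(X,Y,\xi)$, where $T$ is as in the context. Then $(C^\infty(M)\xrightarrow{d}\Omega^1(M),\mu=\mu_0+\mu_1,\nu)$ is a 2-term representation up to homotopy of the Lie algebra $\mathfrak X(M)$.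
   Context: On $\Gamma(TM\oplus T^*M)$ define the pairing $\langle X+\xi,Y+\eta\rangle=\tfrac12(\xi(Y)+\eta(X))$ and the bracket $[\![X+\xi,Y+\eta]\!]=[X,Y]+L_X\eta-L_Y\xi+\tfrac12 d(\xi(Y)-\eta(X))$. Define $T(e_1,e_2,e_3)=\tfrac13\big(\langle[\![e_1,e_2]\!],e_3\rangle+\text{cyclic permutations}\big)$; vector fields and 1-forms are regarded as sections of $TM\oplus T^*M$. A 2-term representation up to homotopy of a Lie algebra $\mathfrak g$ consists of a 2-term complex of vector spaces $V_1\xrightarrow{\mathrm d}V_0$, linear maps $\mu_i:\mathfrak g\to\mathrm{End}(V_i)$ ($i=0,1$) with $\mathrm d\circ\mu_1(X)=\mu_0(X)\circ\mathrm d$ for all $X\in\mathfrak g$, and a linear map $\nu:\wedge^2\mathfrak g\to\mathrm{Hom}(V_0,V_1)$ such that for all $X_1,X_2,X_3\in\mathfrak g$: $\mu_0[X_1,X_2]-[\mu_0(X_1),\mu_0(X_2)]=\mathrm d\circ\nu(X_1,X_2)$; $\mu_1[X_1,X_2]-[\mu_1(X_1),\mu_1(X_2)]=\nu(X_1,X_2)\circ\mathrm d$; and $[\mu_0(X_1)+\mu_1(X_1),\nu(X_2,X_3)]+\text{c.p.}=\nu([X_1,X_2],X_3)+\text{c.p.}$, where $[\mu_0(X)+\mu_1(X),A]=\mu_1(X)\circ A-A\circ\mu_0(X)$ for $A\in\mathrm{Hom}(V_0,V_1)$ and c.p. denotes cyclic permutations of $X_1,X_2,X_3$. One writes $\mu=\mu_0+\mu_1$.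 *)

theory Defs
  imports "HOL-Analysis.Analysis" "HOL-Library.Function_Algebras"
begin

instantiation "fun" :: (type, real_vector) real_vector
begin
definition scaleR_fun :: "real \<Rightarrow> ('a \<Rightarrow> 'b) \<Rightarrow> 'a \<Rightarrow> 'b"
  where "scaleR_fun r f = (\<lambda>x. r *\<^sub>R f x)"
instance by standard (auto simp: scaleR_fun_def fun_eq_iff algebra_simps)
end

fun iter_deriv :: "'a list \<Rightarrow> ('a::real_normed_vector \<Rightarrow> 'b::real_normed_vector) \<Rightarrow> 'a \<Rightarrow> 'b" where
  "iter_deriv [] f = f"
| "iter_deriv (v # vs) f = (\<lambda>x. frechet_derivative (iter_deriv vs f) (at x) v)"

definition smooth_on :: "'a::real_normed_vector set \<Rightarrow> ('a \<Rightarrow> 'b::real_normed_vector) \<Rightarrow> bool" where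
  "smooth_on S f \<longleftrightarrow> open S \<and> (\<forall>vs. \<forall>x\<in>S. iter_deriv vs f differentiable (at x))"

definition smooth_atlas :: "'m topology \<Rightarrow> ('m set \<times> ('m \<Rightarrow> 'a::euclidean_space)) set \<Rightarrow> bool" where
  "smooth_atlas X A \<longleftrightarrow>
     (\<forall>(U, \<phi>)\<in>A. openin X U \<and> open (\<phi> ` U) \<and>
                  homeomorphic_map (subtopology X U) (top_of_set (\<phi> ` U)) \<phi>) \<and>
     (\<Union>(U, \<phi>)\<in>A. U) = topspace X \<and>
     (\<forall>(U, \<phi>)\<in>A. \<forall>(V, \<psi>)\<in>A. smooth_on (\<phi> ` (U \<inter> V)) (\<psi> \<circ> inv_into U \<phi>))"

definition smooth_manifold :: "'m topology \<Rightarrow> ('m set \<times> ('m \<Rightarrow> 'a::euclidean_space)) set \<Rightarrow> bool" where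
  "smooth_manifold X A \<longleftrightarrow> Hausdorff_space X \<and> second_countable X \<and> smooth_atlas X A"

text \<open>C-infinity(M): smooth real functions, extended by 0 outside M.\<close>
definition smooth_fun :: "'m topology \<Rightarrow> ('m set \<times> ('m \<Rightarrow> 'a::euclidean_space)) set \<Rightarrow> ('m \<Rightarrow> real) \<Rightarrow> bool" where
  "smooth_fun X A f \<longleftrightarrow> (\<forall>x. x \<notin> topspace X \<longrightarrow> f x = 0) \<and>
     (\<forall>(U, \<phi>)\<in>A. smooth_on (\<phi> ` U) (f \<circ> inv_into U \<phi>))"

type_synonym 'm vfield = "('m \<Rightarrow> real) \<Rightarrow> ('m \<Rightarrow> real)"
type_synonym 'm oneform = "'m vfield \<Rightarrow> ('m \<Rightarrow> real)"

text \<open>Vector fields, as derivations of C-infinity(M) (zero on non-smooth arguments).\<close>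
definition vector_field :: "'m topology \<Rightarrow> ('m set \<times> ('m \<Rightarrow> 'a::euclidean_space)) set \<Rightarrow> 'm vfield \<Rightarrow> bool" where
  "vector_field X A D \<longleftrightarrow>
     (\<forall>f. smooth_fun X A f \<longrightarrow> smooth_fun X A (D f)) \<and>
     (\<forall>f. \<not> smooth_fun X A f \<longrightarrow> D f = (\<lambda>_. 0)) \<and>
     (\<forall>f g a b. smooth_fun X A f \<longrightarrow> smooth_fun X A g \<longrightarrow>
         D (\<lambda>x. a * f x + b * g x) = (\<lambda>x. a * D f x + b * D g x)) \<and>
     (\<forall>f g. smooth_fun X A f \<longrightarrow> smooth_fun X A g \<longrightarrow>
         D (\<lambda>x. f x * g x) = (\<lambda>x. f x * D g x + D f x * g x))"

text \<open>1-forms, as C-infinity(M)-linear maps from vector fields to C-infinity(M).\<close>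
definition one_form :: "'m topology \<Rightarrow> ('m set \<times> ('m \<Rightarrow> 'a::euclidean_space)) set \<Rightarrow> 'm oneform \<Rightarrow> bool" where
  "one_form X A \<xi> \<longleftrightarrow>
     (\<forall>D. vector_field X A D \<longrightarrow> smooth_fun X A (\<xi> D)) \<and>
     (\<forall>D. \<not> vector_field X A D \<longrightarrow> \<xi> D = (\<lambda>_. 0)) \<and>
     (\<forall>D E f g. vector_field X A D \<longrightarrow> vector_field X A E \<longrightarrow>
        smooth_fun X A f \<longrightarrow> smooth_fun X A g \<longrightarrow>
        \<xi> (\<lambda>h x. f x * D h x + g x * E h x) = (\<lambda>x. f x * \<xi> D x + g x * \<xi> E x))"

definition vf_bracket :: "'m vfield \<Rightarrow> 'm vfield \<Rightarrow> 'm vfield" where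
  "vf_bracket D E = (\<lambda>f x. D (E f) x - E (D f) x)"

definition dR :: "'m topology \<Rightarrow> ('m set \<times> ('m \<Rightarrow> 'a::euclidean_space)) set \<Rightarrow> ('m \<Rightarrow> real) \<Rightarrow> 'm oneform" where
  "dR X A f = (\<lambda>E. if vector_field X A E then E f else (\<lambda>_. 0))"

definition lie_deriv :: "'m topology \<Rightarrow> ('m set \<times> ('m \<Rightarrow> 'a::euclidean_space)) set \<Rightarrow> 'm vfield \<Rightarrow> 'm oneform \<Rightarrow> 'm oneform" where
  "lie_deriv X A D \<xi> = (\<lambda>E. if vector_field X A E then (\<lambda>x. D (\<xi> E) x - \<xi> (vf_bracket D E) x) else (\<lambda>_. 0))"

text \<open>Sections of TM + T*M as pairs (X, xi); the pairing and the (Courant) bracket.\<close>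
definition pairing :: "'m vfield \<times> 'm oneform \<Rightarrow> 'm vfield \<times> 'm oneform \<Rightarrow> 'm \<Rightarrow> real" where
  "pairing e1 e2 = (case e1 of (D, \<xi>) \<Rightarrow> case e2 of (E, \<eta>) \<Rightarrow> (\<lambda>x. (1/2) * (\<xi> E x + \<eta> D x)))"

definition courant :: "'m topology \<Rightarrow> ('m set \<times> ('m \<Rightarrow> 'a::euclidean_space)) set \<Rightarrow>
    'm vfield \<times> 'm oneform \<Rightarrow> 'm vfield \<times> 'm oneform \<Rightarrow> 'm vfield \<times> 'm oneform" where
  "courant X A e1 e2 = (case e1 of (D, \<xi>) \<Rightarrow> case e2 of (E, \<eta>) \<Rightarrow>
     (vf_bracket D E,
      (\<lambda>F x. lie_deriv X A D \<eta> F x - lie_deriv X A E \<xi> F x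
             + (1/2) * dR X A (\<lambda>y. \<xi> E y - \<eta> D y) F x)))"

definition Tform :: "'m topology \<Rightarrow> ('m set \<times> ('m \<Rightarrow> 'a::euclidean_space)) set \<Rightarrow>
    'm vfield \<times> 'm oneform \<Rightarrow> 'm vfield \<times> 'm oneform \<Rightarrow> 'm vfield \<times> 'm oneform \<Rightarrow> 'm \<Rightarrow> real" where
  "Tform X A e1 e2 e3 = (\<lambda>x. (1/3) * (pairing (courant X A e1 e2) e3 x
        + pairing (courant X A e2 e3) e1 x + pairing (courant X A e3 e1) e2 x))"

definition mu0 :: "'m topology \<Rightarrow> ('m set \<times> ('m \<Rightarrow> 'a::euclidean_space)) set \<Rightarrow> 'm vfield \<Rightarrow> 'm oneform \<Rightarrow> 'm oneform" where
  "mu0 X A D \<xi> = snd (courant X A (D, 0) (0, \<xi>))"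

definition mu1 :: "'m topology \<Rightarrow> ('m set \<times> ('m \<Rightarrow> 'a::euclidean_space)) set \<Rightarrow> 'm vfield \<Rightarrow> ('m \<Rightarrow> real) \<Rightarrow> ('m \<Rightarrow> real)" where
  "mu1 X A D f = pairing (D, 0) (0, dR X A f)"

definition nu :: "'m topology \<Rightarrow> ('m set \<times> ('m \<Rightarrow> 'a::euclidean_space)) set \<Rightarrow> 'm vfield \<Rightarrow> 'm vfield \<Rightarrow> 'm oneform \<Rightarrow> ('m \<Rightarrow> real)" where
  "nu X A D E \<xi> = Tform X A (D, 0) (E, 0) (0, \<xi>)"

definition lin_subspace :: "'v::real_vector set \<Rightarrow> bool" where
  "lin_subspace V \<longleftrightarrow> 0 \<in> V \<and> (\<forall>x\<in>V. \<forall>y\<in>V. \<forall>a b. a *\<^sub>R x + b *\<^sub>R y \<in> V)"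

definition lin_on :: "'v::real_vector set \<Rightarrow> ('v \<Rightarrow> 'w::real_vector) \<Rightarrow> bool" where
  "lin_on V f \<longleftrightarrow> (\<forall>x\<in>V. \<forall>y\<in>V. \<forall>a b. f (a *\<^sub>R x + b *\<^sub>R y) = a *\<^sub>R f x + b *\<^sub>R f y)"

definition lie_algebra :: "'g::real_vector set \<Rightarrow> ('g \<Rightarrow> 'g \<Rightarrow> 'g) \<Rightarrow> bool" where
  "lie_algebra g br \<longleftrightarrow> lin_subspace g \<and>
     (\<forall>x\<in>g. \<forall>y\<in>g. br x y \<in> g) \<and>
     (\<forall>z\<in>g. lin_on g (\<lambda>x. br x z)) \<and> (\<forall>z\<in>g. lin_on g (\<lambda>y. br z y)) \<and>
     (\<forall>x\<in>g. br x x = 0) \<and>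
     (\<forall>x\<in>g. \<forall>y\<in>g. \<forall>z\<in>g. br x (br y z) + br y (br z x) + br z (br x y) = 0)"

text \<open>2-term representation up to homotopy (V1 --d--> V0, mu = mu0 + mu1, nu) of (g, br).
  nu is a linear map on the exterior square, i.e. an alternating bilinear map.\<close>
definition two_term_rep_up_to_homotopy ::
  "'g::real_vector set \<Rightarrow> ('g \<Rightarrow> 'g \<Rightarrow> 'g) \<Rightarrow> 'v1::real_vector set \<Rightarrow> 'v0::real_vector set \<Rightarrow>
   ('v1 \<Rightarrow> 'v0) \<Rightarrow> ('g \<Rightarrow> 'v0 \<Rightarrow> 'v0) \<Rightarrow> ('g \<Rightarrow> 'v1 \<Rightarrow> 'v1) \<Rightarrow> ('g \<Rightarrow> 'g \<Rightarrow> 'v0 \<Rightarrow> 'v1) \<Rightarrow> bool" where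
  "two_term_rep_up_to_homotopy g br V1 V0 d m0 m1 n \<longleftrightarrow>
     lie_algebra g br \<and> lin_subspace V1 \<and> lin_subspace V0 \<and>
     (\<forall>w\<in>V1. d w \<in> V0) \<and> lin_on V1 d \<and>
     (\<forall>x\<in>g. (\<forall>v\<in>V0. m0 x v \<in> V0) \<and> lin_on V0 (m0 x)) \<and>
     (\<forall>x\<in>g. (\<forall>w\<in>V1. m1 x w \<in> V1) \<and> lin_on V1 (m1 x)) \<and>
     (\<forall>v\<in>V0. lin_on g (\<lambda>x. m0 x v)) \<and>
     (\<forall>w\<in>V1. lin_on g (\<lambda>x. m1 x w)) \<and>
     (\<forall>x\<in>g. \<forall>y\<in>g. (\<forall>v\<in>V0. n x y v \<in> V1) \<and> lin_on V0 (n x y)) \<and>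
     (\<forall>y\<in>g. \<forall>v\<in>V0. lin_on g (\<lambda>x. n x y v)) \<and>
     (\<forall>x\<in>g. \<forall>v\<in>V0. lin_on g (\<lambda>y. n x y v)) \<and>
     (\<forall>x\<in>g. \<forall>v\<in>V0. n x x v = 0) \<and>
     (\<forall>x\<in>g. \<forall>w\<in>V1. d (m1 x w) = m0 x (d w)) \<and>
     (\<forall>x1\<in>g. \<forall>x2\<in>g. \<forall>v\<in>V0.
        m0 (br x1 x2) v - (m0 x1 (m0 x2 v) - m0 x2 (m0 x1 v)) = d (n x1 x2 v)) \<and>
     (\<forall>x1\<in>g. \<forall>x2\<in>g. \<forall>w\<in>V1.
        m1 (br x1 x2) w - (m1 x1 (m1 x2 w) - m1 x2 (m1 x1 w)) = n x1 x2 (d w)) \<and>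
     (\<forall>x1\<in>g. \<forall>x2\<in>g. \<forall>x3\<in>g. \<forall>v\<in>V0.
        (m1 x1 (n x2 x3 v) - n x2 x3 (m0 x1 v))
      + (m1 x2 (n x3 x1 v) - n x3 x1 (m0 x2 v))
      + (m1 x3 (n x1 x2 v) - n x1 x2 (m0 x3 v))
      = n (br x1 x2) x3 v + n (br x2 x3) x1 v + n (br x3 x1) x2 v)"

end

theory Submission
  imports Defs
begin

(* For vector fields D, E, F, functions f and one-forms xi the structure maps are
     mu1 D f = 1/2 D f,    mu0 D xi F = D (xi F) - xi [D,F] - 1/2 F (xi D),
   and, because the Courant bracket is skew on sections of the form (D,0) and (0,xi),
     nu D E xi = 1/6 (xi [D,E] + mu0 E xi D - mu0 D xi E) = 1/2 xi [D,E] + 1/4 E (xi D) - 1/4 D (xi E).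
   Expanding brackets by linearity and the Leibniz rule turns every axiom of a representation up to
   homotopy into a linear identity between iterated derivatives of functions xi(...), which holds
   modulo the Jacobi identity. The analytic input is that smoothness on chart images is preserved by
   sums and products and that constants (cut off to 0 outside M) are smooth; the latter upgrades the
   C-infinity(M)-linearity of one-forms to real linearity. *)

lemma frechet_derivative_cong_open:
  assumes "open S" "x \<in> S" "\<And>y. y \<in> S \<Longrightarrow> f y = g y"
  shows "frechet_derivative f (at x) = frechet_derivative g (at x)"
proof -
  have "(f has_derivative f') (at x) \<longleftrightarrow> (g has_derivative f') (at x)" for f'
    using has_derivative_transform_within_open[OF _ assms(1,2)] assms(3) by metis
  then show ?thesis
    unfolding frechet_derivative_def by simp
qed

lemma differentiable_transform_within_open:
  assumes "f differentiable (at x)" "open S" "x \<in> S" "\<And>y. y \<in> S \<Longrightarrow> f y = g y"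
  shows "g differentiable (at x)"
  using assms has_derivative_transform_within_open unfolding differentiable_def by blast

lemma iter_deriv_cong_open:
  assumes "open S" "\<And>y. y \<in> S \<Longrightarrow> f y = g y" "x \<in> S"
  shows "iter_deriv vs f x = iter_deriv vs g x"
  using assms(3)
proof (induction vs arbitrary: x)
  case (Cons v vs)
  then show ?case
    using frechet_derivative_cong_open[OF assms(1) Cons.prems, of "iter_deriv vs f"] by simp
qed (use assms in simp)

lemma iter_deriv_append: "iter_deriv (vs @ [v]) f = iter_deriv vs (\<lambda>x. frechet_derivative f (at x) v)"
  by (induction vs) auto

lemma iter_deriv_const: "iter_deriv vs (\<lambda>_. c) = (\<lambda>_. if vs = [] then c else 0)"
  by (induction vs) auto

definition differentiable_upto ::
    "nat \<Rightarrow> 'a::real_normed_vector set \<Rightarrow> ('a \<Rightarrow> 'b::real_normed_vector) \<Rightarrow> bool" where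
  "differentiable_upto n S f \<longleftrightarrow> (\<forall>vs. length vs \<le> n \<longrightarrow> (\<forall>x\<in>S. iter_deriv vs f differentiable (at x)))"

lemma smooth_on_iff_differentiable_upto: "smooth_on S f \<longleftrightarrow> open S \<and> (\<forall>n. differentiable_upto n S f)"
  unfolding smooth_on_def differentiable_upto_def by auto

lemma differentiable_upto_0: "differentiable_upto 0 S f \<longleftrightarrow> (\<forall>x\<in>S. f differentiable (at x))"
  unfolding differentiable_upto_def by simp

lemma differentiable_upto_SucI:
  assumes "\<And>x. x \<in> S \<Longrightarrow> f differentiable (at x)"
    and "\<And>v. differentiable_upto n S (\<lambda>x. frechet_derivative f (at x) v)"
  shows "differentiable_upto (Suc n) S f"
  unfolding differentiable_upto_def
proof (intro allI impI ballI)
  fix vs :: "'a list" and x assume len: "length vs \<le> Suc n" and x: "x \<in> S"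
  show "iter_deriv vs f differentiable (at x)"
  proof (cases vs rule: rev_exhaust)
    case Nil
    then show ?thesis using assms(1) x by simp
  next
    case (snoc ws v)
    then show ?thesis
      using assms(2)[of v] len x unfolding differentiable_upto_def by (simp add: iter_deriv_append)
  qed
qed

lemma differentiable_upto_cong_open:
  assumes S: "open S" and eq: "\<And>y. y \<in> S \<Longrightarrow> f y = g y" and f: "differentiable_upto n S f"
  shows "differentiable_upto n S g"
  unfolding differentiable_upto_def
proof (intro allI impI ballI)
  fix vs :: "'a list" and x assume "length vs \<le> n" and x: "x \<in> S"
  then have "iter_deriv vs f differentiable (at x)"
    using f unfolding differentiable_upto_def by blast
  then show "iter_deriv vs g differentiable (at x)"
    by (rule differentiable_transform_within_open[OF _ S x iter_deriv_cong_open[OF S eq]])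
qed

lemma smooth_on_cong:
  assumes "\<And>y. y \<in> S \<Longrightarrow> f y = g y" "smooth_on S f"
  shows "smooth_on S g"
  using assms differentiable_upto_cong_open[of S f g]
  unfolding smooth_on_iff_differentiable_upto by blast

lemma smooth_on_const: "open S \<Longrightarrow> smooth_on S (\<lambda>_. c)"
  unfolding smooth_on_def iter_deriv_const by auto

lemma smooth_on_imp_differentiable: "smooth_on S f \<Longrightarrow> x \<in> S \<Longrightarrow> f differentiable (at x)"
  unfolding smooth_on_def by (metis iter_deriv.simps(1))

lemma smooth_on_frechet_derivative: "smooth_on S f \<Longrightarrow> smooth_on S (\<lambda>x. frechet_derivative f (at x) v)"
  unfolding smooth_on_def iter_deriv_append[symmetric] by blast

lemma iter_deriv_lincomb:
  fixes f g :: "'a::real_normed_vector \<Rightarrow> real"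
  assumes S: "open S" and f: "differentiable_upto n S f" and g: "differentiable_upto n S g"
    and "length vs \<le> n" "x \<in> S"
  shows "iter_deriv vs (\<lambda>x. a * f x + b * g x) x = a * iter_deriv vs f x + b * iter_deriv vs g x"
  using assms(4,5)
proof (induction vs arbitrary: x)
  case (Cons v vs)
  have "iter_deriv vs f differentiable (at x)" "iter_deriv vs g differentiable (at x)"
    using f g Cons.prems unfolding differentiable_upto_def by auto
  then have "((\<lambda>y. a * iter_deriv vs f y + b * iter_deriv vs g y) has_derivative
      (\<lambda>h. a * frechet_derivative (iter_deriv vs f) (at x) h
         + b * frechet_derivative (iter_deriv vs g) (at x) h)) (at x)"
    unfolding frechet_derivative_works by (intro has_derivative_add has_derivative_mult_right)
  moreover have "frechet_derivative (iter_deriv vs (\<lambda>x. a * f x + b * g x)) (at x)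
      = frechet_derivative (\<lambda>y. a * iter_deriv vs f y + b * iter_deriv vs g y) (at x)"
    using Cons by (intro frechet_derivative_cong_open[OF S]) simp_all
  ultimately show ?case
    by (simp add: frechet_derivative_at[symmetric])
qed simp

lemma differentiable_upto_lincomb:
  fixes f g :: "'a::real_normed_vector \<Rightarrow> real"
  assumes S: "open S" and f: "differentiable_upto n S f" and g: "differentiable_upto n S g"
  shows "differentiable_upto n S (\<lambda>x. a * f x + b * g x)"
  unfolding differentiable_upto_def
proof (intro allI impI ballI)
  fix vs :: "'a list" and x assume len: "length vs \<le> n" and x: "x \<in> S"
  then have "(\<lambda>y. a * iter_deriv vs f y + b * iter_deriv vs g y) differentiable (at x)"
    using f g unfolding differentiable_upto_def
    by (intro differentiable_add differentiable_mult differentiable_const) simp_all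
  moreover have "a * iter_deriv vs f y + b * iter_deriv vs g y
      = iter_deriv vs (\<lambda>x. a * f x + b * g x) y" if "y \<in> S" for y
    using iter_deriv_lincomb[OF S f g len that] by simp
  ultimately show "iter_deriv vs (\<lambda>x. a * f x + b * g x) differentiable (at x)"
    by (rule differentiable_transform_within_open[OF _ S x])
qed

lemma smooth_on_lincomb:
  fixes f g :: "'a::real_normed_vector \<Rightarrow> real"
  shows "smooth_on S f \<Longrightarrow> smooth_on S g \<Longrightarrow> smooth_on S (\<lambda>x. a * f x + b * g x)"
  unfolding smooth_on_iff_differentiable_upto using differentiable_upto_lincomb by blast

lemma frechet_derivative_mult_apply:
  fixes f g :: "'a::real_normed_vector \<Rightarrow> real"
  assumes "f differentiable (at x)" "g differentiable (at x)"
  shows "frechet_derivative (\<lambda>x. f x * g x) (at x) v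
    = f x * frechet_derivative g (at x) v + frechet_derivative f (at x) v * g x"
proof -
  have "((\<lambda>x. f x * g x) has_derivative
      (\<lambda>v. f x * frechet_derivative g (at x) v + frechet_derivative f (at x) v * g x)) (at x)"
    using assms by (intro has_derivative_mult) (simp_all add: frechet_derivative_works)
  then show ?thesis
    by (simp add: frechet_derivative_at[symmetric])
qed

(* D_v (f g) = f D_v g + D_v f g only involves smooth functions, so induction on the order closes. *)
lemma differentiable_upto_mult:
  fixes f g :: "'a::real_normed_vector \<Rightarrow> real"
  shows "smooth_on S f \<Longrightarrow> smooth_on S g \<Longrightarrow> differentiable_upto n S (\<lambda>x. f x * g x)"
proof (induction n arbitrary: f g)
  case 0
  then show ?case
    unfolding differentiable_upto_0
    by (blast intro: differentiable_mult smooth_on_imp_differentiable)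
next
  case (Suc n)
  have S: "open S"
    using Suc.prems unfolding smooth_on_def by simp
  show ?case
  proof (rule differentiable_upto_SucI)
    show "(\<lambda>x. f x * g x) differentiable (at x)" if "x \<in> S" for x
      using Suc.prems that by (intro differentiable_mult smooth_on_imp_differentiable)
    fix v
    let ?Df = "\<lambda>x. frechet_derivative f (at x) v" and ?Dg = "\<lambda>x. frechet_derivative g (at x) v"
    have "differentiable_upto n S (\<lambda>x. 1 * (f x * ?Dg x) + 1 * (?Df x * g x))"
      using Suc by (intro differentiable_upto_lincomb S Suc.IH smooth_on_frechet_derivative)
    then show "differentiable_upto n S (\<lambda>x. frechet_derivative (\<lambda>x. f x * g x) (at x) v)"
      by (rule differentiable_upto_cong_open[OF S, rotated])
         (use smooth_on_imp_differentiable[OF Suc.prems(1)] smooth_on_imp_differentiable[OF Suc.prems(2)]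
           in \<open>simp add: frechet_derivative_mult_apply\<close>)
  qed
qed

lemma smooth_on_mult:
  fixes f g :: "'a::real_normed_vector \<Rightarrow> real"
  shows "smooth_on S f \<Longrightarrow> smooth_on S g \<Longrightarrow> smooth_on S (\<lambda>x. f x * g x)"
  using differentiable_upto_mult unfolding smooth_on_iff_differentiable_upto by blast

lemma lincomb_fun_eq: "a *\<^sub>R (f :: 'x \<Rightarrow> real) + b *\<^sub>R g = (\<lambda>x. a * f x + b * g x)"
  by (simp add: fun_eq_iff scaleR_fun_def)

lemma lincomb_fun2_eq:
  "a *\<^sub>R (D :: 'x \<Rightarrow> 'y \<Rightarrow> real) + b *\<^sub>R E = (\<lambda>h x. a * D h x + b * E h x)"
  by (simp add: fun_eq_iff scaleR_fun_def)

context
  fixes X :: "'m topology" and A :: "('m set \<times> ('m \<Rightarrow> 'a::euclidean_space)) set"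
begin

abbreviation "SF \<equiv> smooth_fun X A"
abbreviation "VF \<equiv> vector_field X A"
abbreviation "OF1 \<equiv> one_form X A"

lemma smooth_fun_vanishes: "SF f \<Longrightarrow> x \<notin> topspace X \<Longrightarrow> f x = 0"
  unfolding smooth_fun_def by auto

lemma smooth_fun_combine:
  assumes "SF f" "SF g" "op 0 0 = 0"
    and "\<And>S (u :: 'a \<Rightarrow> real) v. smooth_on S u \<Longrightarrow> smooth_on S v \<Longrightarrow> smooth_on S (\<lambda>y. op (u y) (v y))"
  shows "SF (\<lambda>x. op (f x) (g x))"
  unfolding smooth_fun_def
proof (intro conjI allI impI ballI)
  fix x assume "x \<notin> topspace X"
  then show "op (f x) (g x) = 0"
    using assms(3) smooth_fun_vanishes[OF assms(1)] smooth_fun_vanishes[OF assms(2)] by simp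
next
  fix p assume "p \<in> A"
  then obtain U \<phi> where p: "p = (U, \<phi>)" "(U, \<phi>) \<in> A"
    by (cases p) auto
  then have "smooth_on (\<phi> ` U) (f \<circ> inv_into U \<phi>)" "smooth_on (\<phi> ` U) (g \<circ> inv_into U \<phi>)"
    using assms(1,2) unfolding smooth_fun_def by auto
  from assms(4)[OF this] show "case p of (U, \<phi>) \<Rightarrow> smooth_on (\<phi> ` U) ((\<lambda>x. op (f x) (g x)) \<circ> inv_into U \<phi>)"
    by (simp add: p o_def)
qed

lemma smooth_fun_lincomb [simp]: "SF f \<Longrightarrow> SF g \<Longrightarrow> SF (\<lambda>x. a * f x + b * g x)"
  by (rule smooth_fun_combine[where op = "\<lambda>u v. a * u + b * v"]) (simp_all add: smooth_on_lincomb)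

lemma smooth_fun_mult [simp]: "SF f \<Longrightarrow> SF g \<Longrightarrow> SF (\<lambda>x. f x * g x)"
  by (rule smooth_fun_combine[where op = "(*)"]) (simp_all add: smooth_on_mult)

lemma smooth_fun_add [simp]: "SF f \<Longrightarrow> SF g \<Longrightarrow> SF (\<lambda>x. f x + g x)"
  using smooth_fun_lincomb[of f g 1 1] by simp

lemma smooth_fun_diff [simp]: "SF f \<Longrightarrow> SF g \<Longrightarrow> SF (\<lambda>x. f x - g x)"
  using smooth_fun_lincomb[of f g 1 "-1"] by simp

lemma smooth_fun_cmult [simp]: "SF f \<Longrightarrow> SF (\<lambda>x. c * f x)"
  using smooth_fun_lincomb[of f f c 0] by simp

lemma smooth_fun_divide [simp]: "SF f \<Longrightarrow> SF (\<lambda>x. f x / c)"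
  using smooth_fun_cmult[of f "1 / c"] by simp

lemma smooth_fun_uminus [simp]: "SF f \<Longrightarrow> SF (\<lambda>x. - f x)"
  using smooth_fun_cmult[of f "-1"] by simp

lemma smooth_fun_uminus_iff: "SF (\<lambda>x. - f x) \<longleftrightarrow> SF f"
  using smooth_fun_uminus[of "\<lambda>x. - f x"] smooth_fun_uminus[of f] by (auto simp del: smooth_fun_uminus)

context
  assumes atlas: "smooth_atlas X A"
begin

definition const_fun :: "real \<Rightarrow> 'm \<Rightarrow> real" where
  "const_fun c = (\<lambda>x. if x \<in> topspace X then c else 0)"

lemma smooth_fun_const_fun [simp]: "SF (const_fun c)"
  unfolding smooth_fun_def
proof (intro conjI allI impI ballI)
  fix p assume "p \<in> A"
  then obtain U \<phi> where p: "p = (U, \<phi>)" "(U, \<phi>) \<in> A"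
    by (cases p) auto
  then have "U \<subseteq> topspace X" "open (\<phi> ` U)"
    using atlas unfolding smooth_atlas_def by (auto dest: openin_subset)
  then have "smooth_on (\<phi> ` U) (const_fun c \<circ> inv_into U \<phi>)"
    by (intro smooth_on_cong[OF _ smooth_on_const]) (auto simp: const_fun_def inv_into_into subsetD)
  then show "case p of (U, \<phi>) \<Rightarrow> smooth_on (\<phi> ` U) (const_fun c \<circ> inv_into U \<phi>)"
    using p by simp
qed (simp add: const_fun_def)

lemma smooth_fun_zero [simp]: "SF (\<lambda>_. 0)"
  using smooth_fun_const_fun[of 0] by (simp add: const_fun_def)

lemma const_fun_mult_smooth:
  assumes "SF f" shows "const_fun c x * f x = c * f x"
  using smooth_fun_vanishes[OF assms] by (auto simp: const_fun_def)

lemma vector_field_smooth [simp]: "VF D \<Longrightarrow> SF (D f)"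
  unfolding vector_field_def by (cases "SF f") auto

lemma vector_field_nonsmooth: "VF D \<Longrightarrow> \<not> SF f \<Longrightarrow> D f = (\<lambda>_. 0)"
  unfolding vector_field_def by auto

lemma vector_field_lincomb_arg:
  "VF D \<Longrightarrow> SF f \<Longrightarrow> SF g \<Longrightarrow> D (\<lambda>x. a * f x + b * g x) = (\<lambda>x. a * D f x + b * D g x)"
  unfolding vector_field_def by blast

lemma vector_field_leibniz:
  "VF D \<Longrightarrow> SF f \<Longrightarrow> SF g \<Longrightarrow> D (\<lambda>x. f x * g x) = (\<lambda>x. f x * D g x + D f x * g x)"
  unfolding vector_field_def by blast

lemma vector_field_add: "VF D \<Longrightarrow> SF f \<Longrightarrow> SF g \<Longrightarrow> D (\<lambda>x. f x + g x) = (\<lambda>x. D f x + D g x)"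
  using vector_field_lincomb_arg[of D f g 1 1] by simp

lemma vector_field_diff: "VF D \<Longrightarrow> SF f \<Longrightarrow> SF g \<Longrightarrow> D (\<lambda>x. f x - g x) = (\<lambda>x. D f x - D g x)"
  using vector_field_lincomb_arg[of D f g 1 "-1"] by simp

lemma vector_field_cmult: "VF D \<Longrightarrow> SF f \<Longrightarrow> D (\<lambda>x. c * f x) = (\<lambda>x. c * D f x)"
  using vector_field_lincomb_arg[of D f f c 0] by simp

lemma vector_field_divide: "VF D \<Longrightarrow> SF f \<Longrightarrow> D (\<lambda>x. f x / c) = (\<lambda>x. D f x / c)"
  using vector_field_cmult[of D f "1 / c"] by simp

lemma vector_field_zero_arg: "VF D \<Longrightarrow> D (\<lambda>_. 0) = (\<lambda>_. 0)"
  using vector_field_cmult[of D "\<lambda>_. 0" 0] by simp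

lemma vector_field_uminus: "VF D \<Longrightarrow> D (\<lambda>x. - f x) = (\<lambda>x. - D f x)"
  using vector_field_cmult[of D f "-1"] vector_field_nonsmooth[of D] smooth_fun_uminus_iff[of f]
  by (cases "SF f") auto

lemmas vector_field_simps = vector_field_add vector_field_diff vector_field_cmult vector_field_divide
  vector_field_uminus vector_field_zero_arg vector_field_leibniz

lemma vector_field_vanishes: "VF D \<Longrightarrow> x \<notin> topspace X \<Longrightarrow> D f x = 0"
  using smooth_fun_vanishes[OF vector_field_smooth] by blast

lemma vector_field_smooth_lincomb:
  assumes "SF f" "SF g" "VF D" "VF E"
  shows "VF (\<lambda>h x. f x * D h x + g x * E h x)"
  using assms unfolding vector_field_def
  by (auto simp: vector_field_simps vector_field_lincomb_arg[OF \<open>VF D\<close>]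
      vector_field_lincomb_arg[OF \<open>VF E\<close>] fun_eq_iff algebra_simps)

lemma const_fun_coefficients:
  "VF D \<Longrightarrow> VF E \<Longrightarrow>
    (\<lambda>h x. a * D h x + b * E h x) = (\<lambda>h x. const_fun a x * D h x + const_fun b x * E h x)"
  by (auto simp: const_fun_def fun_eq_iff vector_field_vanishes)

lemma vector_field_lincomb: "VF D \<Longrightarrow> VF E \<Longrightarrow> VF (\<lambda>h x. a * D h x + b * E h x)"
  by (simp add: const_fun_coefficients vector_field_smooth_lincomb)

lemma vector_field_zero: "VF (\<lambda>h x. 0)"
  unfolding vector_field_def by simp

lemma vf_bracket_apply: "vf_bracket D E f x = D (E f) x - E (D f) x"
  by (simp add: vf_bracket_def)

lemma vector_field_bracket [simp]:
  assumes D: "VF D" and E: "VF E" shows "VF (vf_bracket D E)"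
  unfolding vector_field_def
proof (intro conjI allI impI)
  fix f assume "\<not> SF f"
  then show "vf_bracket D E f = (\<lambda>_. 0)"
    by (simp add: vf_bracket_def vector_field_nonsmooth[OF D] vector_field_nonsmooth[OF E]
        vector_field_zero_arg[OF D] vector_field_zero_arg[OF E])
next
  fix f g a b assume "SF f" "SF g"
  then show "vf_bracket D E (\<lambda>x. a * f x + b * g x) = (\<lambda>x. a * vf_bracket D E f x + b * vf_bracket D E g x)"
    using vector_field_smooth[OF D] vector_field_smooth[OF E]
    by (simp add: vf_bracket_def vector_field_lincomb_arg[OF D] vector_field_lincomb_arg[OF E]
        algebra_simps)
next
  fix f g assume "SF f" "SF g"
  then show "vf_bracket D E (\<lambda>x. f x * g x) = (\<lambda>x. f x * vf_bracket D E g x + vf_bracket D E f x * g x)"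
    using vector_field_smooth[OF D] vector_field_smooth[OF E]
    by (simp add: vf_bracket_def vector_field_simps[OF D] vector_field_simps[OF E] algebra_simps)
qed (use D E in \<open>simp add: vf_bracket_def\<close>)

lemma vf_bracket_swap: "vf_bracket E D = (\<lambda>h x. - vf_bracket D E h x)"
  by (simp add: fun_eq_iff vf_bracket_apply)

lemma vf_bracket_self: "vf_bracket D D = (\<lambda>h x. 0)"
  by (simp add: fun_eq_iff vf_bracket_apply)

lemma vf_bracket_lincomb_left:
  assumes D: "VF D" and E: "VF E" and F: "VF F"
  shows "vf_bracket (\<lambda>h x. a * D h x + b * E h x) F
    = (\<lambda>h x. a * vf_bracket D F h x + b * vf_bracket E F h x)"
proof (intro ext)
  fix h x
  show "vf_bracket (\<lambda>h x. a * D h x + b * E h x) F h x = a * vf_bracket D F h x + b * vf_bracket E F h x"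
  proof (cases "SF h")
    case True
    then show ?thesis
      by (simp add: vf_bracket_apply vector_field_lincomb_arg[OF F] D E algebra_simps)
  next
    case False
    then show ?thesis
      by (simp add: vf_bracket_apply vector_field_nonsmooth D E F vector_field_zero_arg[OF D]
          vector_field_zero_arg[OF E] vector_field_zero_arg[OF F])
  qed
qed

lemma vf_bracket_lincomb_right:
  assumes "VF D" "VF E" "VF F"
  shows "vf_bracket F (\<lambda>h x. a * D h x + b * E h x)
    = (\<lambda>h x. a * vf_bracket F D h x + b * vf_bracket F E h x)"
  using vf_bracket_lincomb_left[OF assms, of a b] by (simp add: vf_bracket_swap[of F] fun_eq_iff)

lemma vf_bracket_jacobi:
  assumes "VF D" "VF E" "VF F"
  shows "vf_bracket (vf_bracket D E) F
    = (\<lambda>h x. vf_bracket D (vf_bracket E F) h x - vf_bracket E (vf_bracket D F) h x)"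
  using vector_field_smooth[OF assms(1)] vector_field_smooth[OF assms(2)] vector_field_smooth[OF assms(3)]
  by (simp add: vf_bracket_def fun_eq_iff vector_field_diff assms)

lemma vf_bracket_leibniz_right:
  assumes D: "VF D" and F: "VF F" and G: "VF G" and f: "SF f" and g: "SF g"
  shows "vf_bracket D (\<lambda>h x. f x * F h x + g x * G h x)
    = (\<lambda>h x. (f x * vf_bracket D F h x + D f x * F h x) + (g x * vf_bracket D G h x + D g x * G h x))"
proof (intro ext)
  fix h x
  show "vf_bracket D (\<lambda>h x. f x * F h x + g x * G h x) h x
    = (f x * vf_bracket D F h x + D f x * F h x) + (g x * vf_bracket D G h x + D g x * G h x)"
  proof (cases "SF h")
    case True
    then show ?thesis
      using f g vector_field_smooth[OF F] vector_field_smooth[OF G]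
      by (simp add: vf_bracket_apply vector_field_simps[OF D] algebra_simps)
  next
    case False
    then show ?thesis
      by (simp add: vf_bracket_apply vector_field_nonsmooth D F G vector_field_zero_arg[OF D]
          vector_field_zero_arg[OF F] vector_field_zero_arg[OF G])
  qed
qed

lemma vf_bracket_jacobi_cyclic:
  assumes D: "VF D" and E: "VF E" and F: "VF F"
  shows "(\<lambda>h x. vf_bracket D (vf_bracket E F) h x + vf_bracket E (vf_bracket F D) h x
      + vf_bracket F (vf_bracket D E) h x) = (\<lambda>h x. 0)"
  using vector_field_smooth[OF D] vector_field_smooth[OF E] vector_field_smooth[OF F]
  by (simp add: vf_bracket_def fun_eq_iff vector_field_diff[OF D] vector_field_diff[OF E]
      vector_field_diff[OF F])

lemma lie_algebra_vector_fields: "lie_algebra {D. VF D} vf_bracket"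
  unfolding lie_algebra_def lin_subspace_def lin_on_def Ball_def mem_Collect_eq lincomb_fun2_eq
proof (intro conjI allI impI)
  show "VF 0"
    using vector_field_zero by (simp add: zero_fun_def)
next
  fix D E F assume D: "VF D" and E: "VF E" and F: "VF F"
  show "vf_bracket D (vf_bracket E F) + vf_bracket E (vf_bracket F D) + vf_bracket F (vf_bracket D E) = 0"
    using vf_bracket_jacobi_cyclic[OF D E F] by (simp add: zero_fun_def plus_fun_def)
qed (simp_all add: vector_field_lincomb vf_bracket_lincomb_left vf_bracket_lincomb_right
    vf_bracket_self zero_fun_def)

lemma lin_subspace_smooth_funs: "lin_subspace {f. SF f}"
  unfolding lin_subspace_def lincomb_fun_eq by (simp add: zero_fun_def)

lemma one_form_smooth: "OF1 \<xi> \<Longrightarrow> VF D \<Longrightarrow> SF (\<xi> D)"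
  unfolding one_form_def by blast

lemma one_form_nonvf: "OF1 \<xi> \<Longrightarrow> \<not> VF D \<Longrightarrow> \<xi> D = (\<lambda>_. 0)"
  unfolding one_form_def by blast

lemma one_form_smooth_lincomb:
  "OF1 \<xi> \<Longrightarrow> VF D \<Longrightarrow> VF E \<Longrightarrow> SF f \<Longrightarrow> SF g \<Longrightarrow>
    \<xi> (\<lambda>h x. f x * D h x + g x * E h x) = (\<lambda>x. f x * \<xi> D x + g x * \<xi> E x)"
  unfolding one_form_def by blast

lemma one_form_lincomb:
  assumes \<xi>: "OF1 \<xi>" and D: "VF D" and E: "VF E"
  shows "\<xi> (\<lambda>h x. a * D h x + b * E h x) = (\<lambda>x. a * \<xi> D x + b * \<xi> E x)"
proof -
  have "\<xi> (\<lambda>h x. a * D h x + b * E h x)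
      = (\<lambda>x. const_fun a x * \<xi> D x + const_fun b x * \<xi> E x)"
    unfolding const_fun_coefficients[OF D E]
    by (rule one_form_smooth_lincomb[OF \<xi> D E smooth_fun_const_fun smooth_fun_const_fun])
  also have "\<dots> = (\<lambda>x. a * \<xi> D x + b * \<xi> E x)"
    by (simp add: const_fun_mult_smooth[OF one_form_smooth[OF \<xi> D]]
        const_fun_mult_smooth[OF one_form_smooth[OF \<xi> E]])
  finally show ?thesis .
qed

lemma one_form_add: "OF1 \<xi> \<Longrightarrow> VF D \<Longrightarrow> VF E \<Longrightarrow> \<xi> (\<lambda>h x. D h x + E h x) = (\<lambda>x. \<xi> D x + \<xi> E x)"
  using one_form_lincomb[of \<xi> D E 1 1] by simp

lemma one_form_uminus: "OF1 \<xi> \<Longrightarrow> VF D \<Longrightarrow> \<xi> (\<lambda>h x. - D h x) = (\<lambda>x. - \<xi> D x)"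
  using one_form_lincomb[of \<xi> D D "-1" 0] by simp

lemma one_form_zero_arg: "OF1 \<xi> \<Longrightarrow> \<xi> (\<lambda>h x. 0) = (\<lambda>x. 0)"
  using one_form_lincomb[of \<xi> "\<lambda>h x. 0" "\<lambda>h x. 0" 0 0] vector_field_zero by simp

lemma one_form_bracket_swap:
  "OF1 \<xi> \<Longrightarrow> VF D \<Longrightarrow> VF E \<Longrightarrow> \<xi> (vf_bracket E D) = (\<lambda>x. - \<xi> (vf_bracket D E) x)"
  by (simp add: vf_bracket_swap[of E D] one_form_uminus)

lemma one_form_bracket_jacobi:
  assumes "OF1 \<xi>" "VF D" "VF E" "VF F"
  shows "\<xi> (vf_bracket (vf_bracket D E) F)
    = (\<lambda>x. \<xi> (vf_bracket D (vf_bracket E F)) x - \<xi> (vf_bracket E (vf_bracket D F)) x)"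
  using one_form_lincomb[OF assms(1), of "vf_bracket D (vf_bracket E F)" "vf_bracket E (vf_bracket D F)" 1 "-1"]
  by (simp add: vf_bracket_jacobi assms)

lemma one_form_lincomb_forms:
  assumes \<xi>: "OF1 \<xi>" and \<eta>: "OF1 \<eta>"
  shows "OF1 (\<lambda>D x. a * \<xi> D x + b * \<eta> D x)"
  unfolding one_form_def
  using one_form_smooth[OF \<xi>] one_form_smooth[OF \<eta>] one_form_nonvf[OF \<xi>] one_form_nonvf[OF \<eta>]
    one_form_smooth_lincomb[OF \<xi>] one_form_smooth_lincomb[OF \<eta>]
  by (simp add: algebra_simps)

lemma lin_subspace_one_forms: "lin_subspace {\<xi>. OF1 \<xi>}"
  unfolding lin_subspace_def lincomb_fun2_eq Ball_def mem_Collect_eq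
  using one_form_lincomb_forms by (simp add: one_form_def zero_fun_def)

lemma dR_apply: "VF F \<Longrightarrow> dR X A f F = F f"
  by (simp add: dR_def)

lemma dR_nonvf: "\<not> VF F \<Longrightarrow> dR X A f F = (\<lambda>_. 0)"
  by (simp add: dR_def)

lemma one_form_dR: "SF f \<Longrightarrow> OF1 (dR X A f)"
  unfolding one_form_def by (simp add: dR_apply dR_nonvf vector_field_smooth_lincomb)

lemma mu0_apply:
  assumes "VF D" "OF1 \<xi>" "VF F"
  shows "mu0 X A D \<xi> F = (\<lambda>x. D (\<xi> F) x - \<xi> (vf_bracket D F) x - 1/2 * F (\<xi> D) x)"
  using assms vector_field_uminus[OF assms(3)]
  by (simp add: mu0_def courant_def lie_deriv_def dR_def fun_eq_iff)

lemma mu0_nonvf: "\<not> VF F \<Longrightarrow> mu0 X A D \<xi> F = (\<lambda>_. 0)"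
  by (simp add: mu0_def courant_def lie_deriv_def dR_def fun_eq_iff)

lemma mu1_eq: "VF D \<Longrightarrow> mu1 X A D f = (\<lambda>x. 1/2 * D f x)"
  by (simp add: mu1_def pairing_def dR_def fun_eq_iff)

lemma snd_courant_form_vector_field:
  "snd (courant X A (0, \<xi>) (D, 0)) = (\<lambda>F x. - mu0 X A D \<xi> F x)"
  by (simp add: mu0_def courant_def lie_deriv_def dR_def vector_field_uminus fun_eq_iff)

lemma nu_eq_mu0:
  assumes "VF D" "VF E"
  shows "nu X A D E \<xi>
    = (\<lambda>x. 1/6 * (\<xi> (vf_bracket D E) x + mu0 X A E \<xi> D x - mu0 X A D \<xi> E x))"
proof -
  have DE: "pairing (courant X A (D, 0) (E, 0)) (0, \<xi>) = (\<lambda>x. 1/2 * \<xi> (vf_bracket D E) x)"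
    using vector_field_zero_arg[OF assms(1)] vector_field_zero_arg[OF assms(2)]
    by (simp add: pairing_def courant_def lie_deriv_def dR_def zero_fun_def vector_field_zero)
  have E\<xi>: "pairing (courant X A (E, 0) (0, \<xi>)) (D, 0) = (\<lambda>x. 1/2 * mu0 X A E \<xi> D x)"
    by (simp add: pairing_def prod.case_eq_if mu0_def)
  have \<xi>D: "pairing (courant X A (0, \<xi>) (D, 0)) (E, 0) = (\<lambda>x. - 1/2 * mu0 X A D \<xi> E x)"
    by (simp add: pairing_def prod.case_eq_if snd_courant_form_vector_field)
  show ?thesis
    unfolding nu_def Tform_def DE E\<xi> \<xi>D by (simp add: algebra_simps)
qed

lemma nu_eq:
  assumes "VF D" "VF E" "OF1 \<xi>"
  shows "nu X A D E \<xi>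
    = (\<lambda>x. 1/2 * \<xi> (vf_bracket D E) x + 1/4 * E (\<xi> D) x - 1/4 * D (\<xi> E) x)"
  using one_form_bracket_swap[OF assms(3,1,2)]
  by (simp add: nu_eq_mu0 mu0_apply assms vf_bracket_self one_form_zero_arg fun_eq_iff)

lemma one_form_mu0:
  assumes D: "VF D" and \<xi>: "OF1 \<xi>"
  shows "OF1 (mu0 X A D \<xi>)"
  unfolding one_form_def
proof (intro conjI allI impI)
  fix F assume F: "VF F"
  then show "SF (mu0 X A D \<xi> F)"
    using one_form_smooth[OF \<xi>] vector_field_smooth[OF D] vector_field_smooth[OF F] D
    by (simp add: mu0_apply \<xi>)
next
  fix F assume "\<not> VF F"
  then show "mu0 X A D \<xi> F = (\<lambda>_. 0)"
    by (rule mu0_nonvf)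
next
  fix F G f g assume F: "VF F" and G: "VF G" and f: "SF f" and g: "SF g"
  have DF: "VF (vf_bracket D F)" and DG: "VF (vf_bracket D G)"
    using D F G by simp_all
  have \<xi>_bracket: "\<xi> (vf_bracket D (\<lambda>h x. f x * F h x + g x * G h x))
    = (\<lambda>x. (f x * \<xi> (vf_bracket D F) x + D f x * \<xi> F x) + (g x * \<xi> (vf_bracket D G) x + D g x * \<xi> G x))"
    using D F G f g DF DG
    by (simp add: vf_bracket_leibniz_right one_form_add[OF \<xi>] vector_field_smooth_lincomb
        one_form_smooth_lincomb[OF \<xi>])
  have \<xi>_comb: "\<xi> (\<lambda>h x. f x * F h x + g x * G h x) = (\<lambda>x. f x * \<xi> F x + g x * \<xi> G x)"
    by (rule one_form_smooth_lincomb[OF \<xi> F G f g])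
  show "mu0 X A D \<xi> (\<lambda>h x. f x * F h x + g x * G h x)
      = (\<lambda>x. f x * mu0 X A D \<xi> F x + g x * mu0 X A D \<xi> G x)"
    using f g one_form_smooth[OF \<xi>] D F G vector_field_smooth[OF D]
    by (simp add: mu0_apply \<xi> vector_field_smooth_lincomb \<xi>_bracket \<xi>_comb
        vector_field_simps[OF D] algebra_simps)
qed

lemma lin_on_dR: "lin_on {f. SF f} (dR X A)"
  unfolding lin_on_def Ball_def mem_Collect_eq lincomb_fun_eq lincomb_fun2_eq
proof (intro allI impI ext)
  fix f g a b F x assume "SF f" "SF g"
  then show "dR X A (\<lambda>x. a * f x + b * g x) F x = a * dR X A f F x + b * dR X A g F x"
    by (cases "VF F") (simp_all add: dR_apply dR_nonvf vector_field_lincomb_arg)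
qed

lemma one_form_bracket_lincomb_left:
  assumes "OF1 \<xi>" "VF D" "VF E" "VF F"
  shows "\<xi> (vf_bracket (\<lambda>h x. a * D h x + b * E h x) F)
    = (\<lambda>x. a * \<xi> (vf_bracket D F) x + b * \<xi> (vf_bracket E F) x)"
  using assms by (simp add: vf_bracket_lincomb_left one_form_lincomb)

lemma mu0_lincomb_arg:
  assumes D: "VF D" and \<xi>: "OF1 \<xi>" and \<eta>: "OF1 \<eta>"
  shows "mu0 X A D (\<lambda>F x. a * \<xi> F x + b * \<eta> F x) = (\<lambda>F x. a * mu0 X A D \<xi> F x + b * mu0 X A D \<eta> F x)"
proof (intro ext)
  fix F x
  show "mu0 X A D (\<lambda>F x. a * \<xi> F x + b * \<eta> F x) F x = a * mu0 X A D \<xi> F x + b * mu0 X A D \<eta> F x"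
  proof (cases "VF F")
    case F: True
    then show ?thesis
      using one_form_smooth[OF \<xi>] one_form_smooth[OF \<eta>] D
      by (simp add: mu0_apply one_form_lincomb_forms \<xi> \<eta> vector_field_lincomb_arg[OF D]
          vector_field_lincomb_arg[OF F] algebra_simps)
  qed (simp add: mu0_nonvf)
qed

lemma mu0_lincomb_vf:
  assumes \<xi>: "OF1 \<xi>" and D: "VF D" and E: "VF E"
  shows "mu0 X A (\<lambda>h x. a * D h x + b * E h x) \<xi> = (\<lambda>F x. a * mu0 X A D \<xi> F x + b * mu0 X A E \<xi> F x)"
proof (intro ext)
  fix F x
  show "mu0 X A (\<lambda>h x. a * D h x + b * E h x) \<xi> F x = a * mu0 X A D \<xi> F x + b * mu0 X A E \<xi> F x"
  proof (cases "VF F")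
    case F: True
    then show ?thesis
      using one_form_smooth[OF \<xi>] D E
      by (simp add: mu0_apply vector_field_lincomb \<xi> one_form_bracket_lincomb_left
          one_form_lincomb vector_field_lincomb_arg[OF F] algebra_simps)
  qed (simp add: mu0_nonvf)
qed

lemma smooth_fun_mu1: "VF D \<Longrightarrow> SF (mu1 X A D f)"
  by (simp add: mu1_eq)

lemma lin_on_mu1_arg: "VF D \<Longrightarrow> lin_on {f. SF f} (mu1 X A D)"
  by (simp add: lin_on_def lincomb_fun_eq mu1_eq vector_field_lincomb_arg algebra_simps)

lemma lin_on_mu1_vf: "lin_on {D. VF D} (\<lambda>D. mu1 X A D f)"
  by (simp add: lin_on_def lincomb_fun_eq lincomb_fun2_eq mu1_eq vector_field_lincomb algebra_simps)

lemma lin_on_mu0_arg: "VF D \<Longrightarrow> lin_on {\<xi>. OF1 \<xi>} (mu0 X A D)"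
  by (simp add: lin_on_def lincomb_fun2_eq mu0_lincomb_arg)

lemma lin_on_mu0_vf: "OF1 \<xi> \<Longrightarrow> lin_on {D. VF D} (\<lambda>D. mu0 X A D \<xi>)"
  by (simp add: lin_on_def lincomb_fun2_eq mu0_lincomb_vf)

lemma nu_swap:
  assumes "VF D" "VF E" "OF1 \<xi>"
  shows "nu X A E D \<xi> = (\<lambda>x. - nu X A D E \<xi> x)"
  using assms by (simp add: nu_eq_mu0 one_form_bracket_swap[OF assms(3,1,2)] algebra_simps)

lemma smooth_fun_nu: "VF D \<Longrightarrow> VF E \<Longrightarrow> OF1 \<xi> \<Longrightarrow> SF (nu X A D E \<xi>)"
  using vector_field_smooth[of D] vector_field_smooth[of E]
  by (simp add: nu_eq one_form_smooth)

lemma nu_self: "VF D \<Longrightarrow> OF1 \<xi> \<Longrightarrow> nu X A D D \<xi> = 0"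
  by (simp add: nu_eq_mu0 vf_bracket_self one_form_zero_arg zero_fun_def)

lemma nu_lincomb_arg:
  assumes "VF D" "VF E" "OF1 \<xi>" "OF1 \<eta>"
  shows "nu X A D E (\<lambda>F x. a * \<xi> F x + b * \<eta> F x) = (\<lambda>x. a * nu X A D E \<xi> x + b * nu X A D E \<eta> x)"
  using assms by (simp add: nu_eq_mu0 mu0_lincomb_arg algebra_simps)

lemma nu_lincomb_left:
  assumes "VF D" "VF E" "VF F" "OF1 \<xi>"
  shows "nu X A (\<lambda>h x. a * D h x + b * E h x) F \<xi> = (\<lambda>x. a * nu X A D F \<xi> x + b * nu X A E F \<xi> x)"
  using assms
  by (simp add: nu_eq_mu0 vector_field_lincomb one_form_bracket_lincomb_left mu0_lincomb_vf
      one_form_lincomb one_form_mu0 algebra_simps)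

lemma nu_lincomb_right:
  assumes "VF D" "VF E" "VF F" "OF1 \<xi>"
  shows "nu X A F (\<lambda>h x. a * D h x + b * E h x) \<xi> = (\<lambda>x. a * nu X A F D \<xi> x + b * nu X A F E \<xi> x)"
  using assms by (simp add: nu_swap[of _ F] vector_field_lincomb nu_lincomb_left algebra_simps)

lemma lin_on_nu_arg: "VF D \<Longrightarrow> VF E \<Longrightarrow> lin_on {\<xi>. OF1 \<xi>} (nu X A D E)"
  by (simp add: lin_on_def lincomb_fun_eq lincomb_fun2_eq nu_lincomb_arg)

lemma lin_on_nu_left: "VF F \<Longrightarrow> OF1 \<xi> \<Longrightarrow> lin_on {D. VF D} (\<lambda>D. nu X A D F \<xi>)"
  by (simp add: lin_on_def lincomb_fun_eq lincomb_fun2_eq nu_lincomb_left)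

lemma lin_on_nu_right: "VF F \<Longrightarrow> OF1 \<xi> \<Longrightarrow> lin_on {D. VF D} (\<lambda>D. nu X A F D \<xi>)"
  by (simp add: lin_on_def lincomb_fun_eq lincomb_fun2_eq nu_lincomb_right)

lemma dR_mu1_eq_mu0_dR:
  assumes D: "VF D" and f: "SF f"
  shows "dR X A (mu1 X A D f) = mu0 X A D (dR X A f)"
proof (intro ext)
  fix F x
  show "dR X A (mu1 X A D f) F x = mu0 X A D (dR X A f) F x"
  proof (cases "VF F")
    case F: True
    then show ?thesis
      using vector_field_smooth[OF D]
      by (simp add: mu1_eq D mu0_apply one_form_dR f dR_apply vf_bracket_apply vector_field_divide)
  qed (simp add: dR_nonvf mu0_nonvf)
qed

lemma mu0_curvature_eq_dR_nu:
  assumes X1: "VF X1" and X2: "VF X2" and \<xi>: "OF1 \<xi>"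
  shows "mu0 X A (vf_bracket X1 X2) \<xi> - (mu0 X A X1 (mu0 X A X2 \<xi>) - mu0 X A X2 (mu0 X A X1 \<xi>))
    = dR X A (nu X A X1 X2 \<xi>)"
proof (intro ext)
  fix F x
  show "(mu0 X A (vf_bracket X1 X2) \<xi> - (mu0 X A X1 (mu0 X A X2 \<xi>) - mu0 X A X2 (mu0 X A X1 \<xi>))) F x
    = dR X A (nu X A X1 X2 \<xi>) F x"
  proof (cases "VF F")
    case F: True
    note smooth = vector_field_smooth[OF X1] vector_field_smooth[OF X2] vector_field_smooth[OF F]
      one_form_smooth[OF \<xi>]
    show ?thesis
      by (simp add: X1 X2 F \<xi> smooth mu0_apply one_form_mu0 nu_eq dR_apply vf_bracket_apply
          one_form_bracket_jacobi one_form_bracket_swap[OF \<xi> X1 X2]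
          vector_field_simps[OF X1] vector_field_simps[OF X2] vector_field_simps[OF F])
         (simp add: field_simps)
  qed (simp add: dR_nonvf mu0_nonvf)
qed

lemma mu1_curvature_eq_nu_dR:
  assumes X1: "VF X1" and X2: "VF X2" and f: "SF f"
  shows "mu1 X A (vf_bracket X1 X2) f - (mu1 X A X1 (mu1 X A X2 f) - mu1 X A X2 (mu1 X A X1 f))
    = nu X A X1 X2 (dR X A f)"
  using vector_field_smooth[OF X1] vector_field_smooth[OF X2]
  by (simp add: fun_eq_iff mu1_eq nu_eq one_form_dR f dR_apply X1 X2 vf_bracket_apply
      vector_field_divide)

lemma one_form_jacobi_cyclic:
  assumes \<xi>: "OF1 \<xi>" and D: "VF D" and E: "VF E" and F: "VF F"
  shows "\<xi> (vf_bracket D (vf_bracket E F)) x + \<xi> (vf_bracket E (vf_bracket F D)) x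
    + \<xi> (vf_bracket F (vf_bracket D E)) x = 0"
proof -
  have "\<xi> (\<lambda>h x. vf_bracket D (vf_bracket E F) h x + vf_bracket E (vf_bracket F D) h x
      + vf_bracket F (vf_bracket D E) h x)
    = (\<lambda>x. \<xi> (vf_bracket D (vf_bracket E F)) x + \<xi> (vf_bracket E (vf_bracket F D)) x
      + \<xi> (vf_bracket F (vf_bracket D E)) x)"
    using D E F by (simp add: one_form_add[OF \<xi>] vector_field_lincomb[of _ _ 1 1, simplified])
  then show ?thesis
    by (simp add: vf_bracket_jacobi_cyclic[OF D E F] one_form_zero_arg[OF \<xi>] fun_eq_iff)
qed

lemma nu_cocycle:
  assumes X1: "VF X1" and X2: "VF X2" and X3: "VF X3" and \<xi>: "OF1 \<xi>"
  shows "(mu1 X A X1 (nu X A X2 X3 \<xi>) - nu X A X2 X3 (mu0 X A X1 \<xi>))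
      + (mu1 X A X2 (nu X A X3 X1 \<xi>) - nu X A X3 X1 (mu0 X A X2 \<xi>))
      + (mu1 X A X3 (nu X A X1 X2 \<xi>) - nu X A X1 X2 (mu0 X A X3 \<xi>))
    = nu X A (vf_bracket X1 X2) X3 \<xi> + nu X A (vf_bracket X2 X3) X1 \<xi> + nu X A (vf_bracket X3 X1) X2 \<xi>"
proof (intro ext)
  fix x
  have X12: "VF (vf_bracket X1 X2)" and X23: "VF (vf_bracket X2 X3)" and X31: "VF (vf_bracket X3 X1)"
    using X1 X2 X3 by simp_all
  note smooth = vector_field_smooth[OF X1] vector_field_smooth[OF X2] vector_field_smooth[OF X3]
    one_form_smooth[OF \<xi>]
  have jacobi: "\<xi> (vf_bracket X3 (vf_bracket X1 X2)) x
      = - \<xi> (vf_bracket X1 (vf_bracket X2 X3)) x - \<xi> (vf_bracket X2 (vf_bracket X3 X1)) x"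
    using one_form_jacobi_cyclic[OF \<xi> X1 X2 X3, of x] by linarith
  \<comment> \<open>brackets are normalised to the cyclic orientation [X1,X2], [X2,X3], [X3,X1]\<close>
  show "((mu1 X A X1 (nu X A X2 X3 \<xi>) - nu X A X2 X3 (mu0 X A X1 \<xi>))
      + (mu1 X A X2 (nu X A X3 X1 \<xi>) - nu X A X3 X1 (mu0 X A X2 \<xi>))
      + (mu1 X A X3 (nu X A X1 X2 \<xi>) - nu X A X1 X2 (mu0 X A X3 \<xi>))) x
    = (nu X A (vf_bracket X1 X2) X3 \<xi> + nu X A (vf_bracket X2 X3) X1 \<xi> + nu X A (vf_bracket X3 X1) X2 \<xi>) x"
    by (simp add: X1 X2 X3 X12 X23 X31 \<xi> smooth mu1_eq nu_eq mu0_apply one_form_mu0 vf_bracket_apply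
        one_form_bracket_swap[OF \<xi> X3 X12] one_form_bracket_swap[OF \<xi> X1 X23]
        one_form_bracket_swap[OF \<xi> X2 X31] one_form_bracket_swap[OF \<xi> X3 X1]
        one_form_bracket_swap[OF \<xi> X1 X2] one_form_bracket_swap[OF \<xi> X2 X3]
        vector_field_simps[OF X1] vector_field_simps[OF X2] vector_field_simps[OF X3] jacobi)
       (simp add: field_simps)
qed

end

end

theorem mainTheorem1:
  fixes X :: "'m topology" and A :: "('m set \<times> ('m \<Rightarrow> 'a::euclidean_space)) set"
  assumes "smooth_manifold X A"
  shows "two_term_rep_up_to_homotopy
           {D. vector_field X A D} vf_bracket
           {f. smooth_fun X A f} {\<xi>. one_form X A \<xi>}
           (dR X A) (mu0 X A) (mu1 X A) (nu X A)"
proof -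
  have atlas: "smooth_atlas X A"
    using assms unfolding smooth_manifold_def by blast
  show ?thesis
    unfolding two_term_rep_up_to_homotopy_def
    by (simp add: atlas lie_algebra_vector_fields lin_subspace_smooth_funs lin_subspace_one_forms
        one_form_dR lin_on_dR one_form_mu0 lin_on_mu0_arg lin_on_mu0_vf smooth_fun_mu1
        lin_on_mu1_arg lin_on_mu1_vf smooth_fun_nu lin_on_nu_arg lin_on_nu_left lin_on_nu_right nu_self
        dR_mu1_eq_mu0_dR mu0_curvature_eq_dR_nu mu1_curvature_eq_nu_dR nu_cocycle)
qed

end
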